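(* Let $U^{init}\subseteq C$ be a set of (uncovered) clients and let $F^{init}$ be a minimum-cost spanning forest of the complete graph on $C\cup R$ in which every component contains exactly one vertex of $R\cup(C\setminus U^{init})$, regarded as the root of that component. Apply the Tree Pruning procedure described in the context to each tree of $F^{init}$; let $F'$ be the resulting forest, $U'$ the set of clients that remain uncovered, and $\mathcal T_1,\dots,\mathcal T_m$ all tours output. Then $\sum_{i=1}^m c(\mathcal T_i)\le 2.5\,(c(F^{init})-c(F')) + \frac{1}{\beta}\,(\ell(U^{init})-\ell(U'))$.
   Context: Setting: disjoint finite sets $C$ (clients) and $R$ (depots, nonempty) in a metric space with costs $c$; integer capacity $k\ge 3$; $c(v,R)=\min_{r\in R}c(v,r)>0$ for every client. For a client $v$, $\ell_v=\frac{2}{k}c(v,R)$, and $\ell(S)=\sum_{v\in S}\ell_v$. Constant $\beta = 0.5902302342$. Costs of trees, forests and tours are total edge costs (counting multiplicity). Tree Pruning procedure for a rooted tree $T$ with root $v_T$: maintain the set $U$ of uncovered clients (initially the non-root vertices of $T$). For a vertex $w$, $T_w$ is the subtree rooted at $w$ and $U(T_w)$ its uncovered vertices. Repeat the following iteration as long as it covers some client: let $u$ be any deepest vertex of the current $T$ with $|U(T_u)|>k$, or $u=v_T$ if none exists; let $u_1,u_2,\dots$ be the children of $u$. Grouping: put each $T_{u_i}$ in its own group, then while two groups can be merged so that the merged group has at most $k$ uncovered clients, merge them. For a group $G$, $c(G)$ is the total cost of its subtrees plus the edges joining their roots to $u$, and $U(G)$ the uncovered clients in its subtrees. Tour $\mathcal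 T(G)$: double all edges of the subtrees of $G$ and their edges to $u$, add two copies of a cheapest edge between a depot $r'$ and a client of $U(G)$, and shortcut the Eulerian tour to visit only $\{r'\}\cup U(G)$. For two distinct groups $G,G'$, let $A$ be the $k-|U(G)|$ clients of $U(G')$ with largest $\ell_v$; tour $\mathcal T(G,G')$: double all edges of subtrees of $G$ and $G'$ and their edges to $u$, add two copies of a cheapest edge between a depot $r'$ and a client of $U(G)\cup A$, shortcut to visit only $\{r'\}\cup U(G)\cup A$. In the iteration: if some group $G_i$ has $c(\mathcal T(G_i))\le 2.5\,c(G_i)+\frac1\beta\ell(U(G_i))$, output $\mathcal T(G_i)$, delete the subtrees of $G_i$ (with their edges to $u$) from $T$, and remove $U(G_i)$ from $U$; else if two distinct groups $G_i,G_j$ satisfy $c(\mathcal T(G_i,G_j))\le 2.5\,c(G_i)+\frac1\beta\ell(U(G_i)\cup A)$ (with $A$ defined from $G=G_i$, $G'=G_j$), output $\mathcal T(G_i,G_j)$, delete only the subtrees of $G_i$ from $T$, and remove $U(G_i)\cup A$ from $U$ (the vertices of $A$ stay in $T$ but are covered). *)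

theory Defs
  imports Complex_Main "HOL-Library.Multiset"
begin

definition beta :: real where "beta = 0.5902302342"

definition metric :: "('a \<Rightarrow> 'a \<Rightarrow> real) \<Rightarrow> bool" where
  "metric c \<longleftrightarrow> (\<forall>x y. c x y = 0 \<longleftrightarrow> x = y) \<and> (\<forall>x y. c x y = c y x)
     \<and> (\<forall>x y z. c x z \<le> c x y + c y z)"

definition cdist :: "('a \<Rightarrow> 'a \<Rightarrow> real) \<Rightarrow> 'a \<Rightarrow> 'a set \<Rightarrow> real" where
  "cdist c v R = Min ((\<lambda>r. c v r) ` R)"

definition ell :: "('a \<Rightarrow> 'a \<Rightarrow> real) \<Rightarrow> 'a set \<Rightarrow> nat \<Rightarrow> 'a \<Rightarrow> real" where
  "ell c R k v = 2 / real k * cdist c v R"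

definition ellS :: "('a \<Rightarrow> 'a \<Rightarrow> real) \<Rightarrow> 'a set \<Rightarrow> nat \<Rightarrow> 'a set \<Rightarrow> real" where
  "ellS c R k S = (\<Sum>v\<in>S. ell c R k v)"

definition edge_cost :: "('a \<Rightarrow> 'a \<Rightarrow> real) \<Rightarrow> 'a set \<Rightarrow> real" where
  "edge_cost c e = (THE w. \<exists>x y. e = {x, y} \<and> w = c x y)"

definition forest_cost :: "('a \<Rightarrow> 'a \<Rightarrow> real) \<Rightarrow> 'a set set \<Rightarrow> real" where
  "forest_cost c F = (\<Sum>e\<in>F. edge_cost c e)"

definition is_edges :: "'a set \<Rightarrow> 'a set set \<Rightarrow> bool" where
  "is_edges V F \<longleftrightarrow> (\<forall>e\<in>F. \<exists>x y. x \<noteq> y \<and> x \<in> V \<and> y \<in> V \<and> e = {x, y})"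

definition connected_in :: "'a set set \<Rightarrow> 'a \<Rightarrow> 'a \<Rightarrow> bool" where
  "connected_in F = (\<lambda>x y. {x, y} \<in> F)\<^sup>*\<^sup>*"

definition acyclic_edges :: "'a set set \<Rightarrow> bool" where
  "acyclic_edges F \<longleftrightarrow> (\<forall>e\<in>F. \<forall>x y. e = {x, y} \<and> x \<noteq> y \<longrightarrow> \<not> connected_in (F - {e}) x y)"

definition rooted_forest :: "'a set \<Rightarrow> 'a set \<Rightarrow> 'a set set \<Rightarrow> bool" where
  "rooted_forest V S F \<longleftrightarrow> is_edges V F \<and> acyclic_edges F
     \<and> (\<forall>x\<in>V. \<exists>!s. s \<in> S \<and> connected_in F x s)"

definition subtree :: "('a \<Rightarrow> 'a) \<Rightarrow> 'a set \<Rightarrow> 'a \<Rightarrow> 'a set" where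
  "subtree par V w = {x \<in> V. \<exists>n. (par ^^ n) x = w}"

definition depth :: "('a \<Rightarrow> 'a) \<Rightarrow> 'a \<Rightarrow> 'a \<Rightarrow> nat" where
  "depth par rt x = (LEAST n. (par ^^ n) x = rt)"

definition children :: "('a \<Rightarrow> 'a) \<Rightarrow> 'a \<Rightarrow> 'a set \<Rightarrow> 'a \<Rightarrow> 'a set" where
  "children par rt V u = {x \<in> V. x \<noteq> rt \<and> par x = u}"

definition tree_edges :: "('a \<Rightarrow> 'a) \<Rightarrow> 'a \<Rightarrow> 'a set \<Rightarrow> 'a set set" where
  "tree_edges par rt V = {{x, par x} | x. x \<in> V - {rt}}"

definition valid_u :: "('a \<Rightarrow> 'a) \<Rightarrow> 'a \<Rightarrow> nat \<Rightarrow> 'a set \<Rightarrow> 'a set \<Rightarrow> 'a \<Rightarrow> bool" where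
  "valid_u par rt k V U u \<longleftrightarrow>
     (if \<exists>w\<in>V. card (U \<inter> subtree par V w) > k
      then u \<in> V \<and> card (U \<inter> subtree par V u) > k
           \<and> (\<forall>w\<in>V. card (U \<inter> subtree par V w) > k \<longrightarrow> depth par rt w \<le> depth par rt u)
      else u = rt)"

text \<open>Vertices of the subtrees of a group G (a set of children of u), its uncovered
  clients and its cost (subtree edges plus edges to u).\<close>
definition gverts :: "('a \<Rightarrow> 'a) \<Rightarrow> 'a set \<Rightarrow> 'a set \<Rightarrow> 'a set" where
  "gverts par V G = (\<Union>w\<in>G. subtree par V w)"

definition gU :: "('a \<Rightarrow> 'a) \<Rightarrow> 'a set \<Rightarrow> 'a set \<Rightarrow> 'a set \<Rightarrow> 'a set" where
  "gU par V U G = U \<inter> gverts par V G"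

definition gcost :: "('a \<Rightarrow> 'a \<Rightarrow> real) \<Rightarrow> ('a \<Rightarrow> 'a) \<Rightarrow> 'a set \<Rightarrow> 'a set \<Rightarrow> real" where
  "gcost c par V G = (\<Sum>x\<in>gverts par V G. c x (par x))"

inductive grp_reach :: "('a set \<Rightarrow> nat) \<Rightarrow> nat \<Rightarrow> 'a set set \<Rightarrow> 'a set set \<Rightarrow> bool"
  for f k P0 where
  start: "grp_reach f k P0 P0"
| merge: "grp_reach f k P0 P \<Longrightarrow> G \<in> P \<Longrightarrow> G' \<in> P \<Longrightarrow> G \<noteq> G' \<Longrightarrow> f (G \<union> G') \<le> k
          \<Longrightarrow> grp_reach f k P0 (insert (G \<union> G') (P - {G, G'}))"

definition valid_grouping :: "('a \<Rightarrow> 'a) \<Rightarrow> 'a \<Rightarrow> nat \<Rightarrow> 'a set \<Rightarrow> 'a set \<Rightarrow> 'a \<Rightarrow> 'a set set \<Rightarrow> bool" where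
  "valid_grouping par rt k V U u P \<longleftrightarrow>
     grp_reach (\<lambda>G. card (gU par V U G)) k {{w} | w. w \<in> children par rt V u} P
     \<and> \<not> (\<exists>G\<in>P. \<exists>G'\<in>P. G \<noteq> G' \<and> card (gU par V U (G \<union> G')) \<le> k)"

definition cheapest_edge :: "('a \<Rightarrow> 'a \<Rightarrow> real) \<Rightarrow> 'a set \<Rightarrow> 'a set \<Rightarrow> 'a \<Rightarrow> 'a \<Rightarrow> bool" where
  "cheapest_edge c R T r' v \<longleftrightarrow> r' \<in> R \<and> v \<in> T \<and> (\<forall>r\<in>R. \<forall>y\<in>T. c r' v \<le> c r y)"

definition euler_circuit :: "'a set multiset \<Rightarrow> 'a list \<Rightarrow> bool" where
  "euler_circuit M w \<longleftrightarrow> length w \<ge> 2 \<and> hd w = last w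
     \<and> mset (map (\<lambda>i. {w ! i, w ! Suc i}) [0..<length w - 1]) = M"

text \<open>Shortcutting: keep only the first visit of each vertex of X (closing vertex dropped);
  the result is read as a cyclic tour.\<close>
definition shortcut :: "'a set \<Rightarrow> 'a list \<Rightarrow> 'a list" where
  "shortcut X w = rev (remdups (rev (filter (\<lambda>x. x \<in> X) (butlast w))))"

definition tour_cost :: "('a \<Rightarrow> 'a \<Rightarrow> real) \<Rightarrow> 'a list \<Rightarrow> real" where
  "tour_cost c t = (\<Sum>i<length t. c (t ! i) (t ! (Suc i mod length t)))"

definition double_edges :: "('a \<Rightarrow> 'a) \<Rightarrow> 'a set \<Rightarrow> 'a set multiset" where
  "double_edges par X = (\<Sum>x\<in>X. {#{x, par x}, {x, par x}#})"

definition is_tour :: "('a \<Rightarrow> 'a \<Rightarrow> real) \<Rightarrow> 'a set \<Rightarrow> ('a \<Rightarrow> 'a) \<Rightarrow> 'a set \<Rightarrow> 'a set \<Rightarrow> 'a list \<Rightarrow> bool" where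
  "is_tour c R par X T t \<longleftrightarrow> (\<exists>r' v w. cheapest_edge c R T r' v
     \<and> euler_circuit (double_edges par X + {#{r', v}, {r', v}#}) w
     \<and> t = shortcut (insert r' T) w)"

definition pair_set_ok :: "('a \<Rightarrow> 'a \<Rightarrow> real) \<Rightarrow> 'a set \<Rightarrow> nat \<Rightarrow> ('a \<Rightarrow> 'a) \<Rightarrow> 'a set \<Rightarrow> 'a set
     \<Rightarrow> 'a set \<Rightarrow> 'a set \<Rightarrow> 'a set \<Rightarrow> bool" where
  "pair_set_ok c R k par V U G G' A \<longleftrightarrow> A \<subseteq> gU par V U G'
     \<and> card A = k - card (gU par V U G)
     \<and> (\<forall>a\<in>A. \<forall>b\<in>gU par V U G' - A. ell c R k b \<le> ell c R k a)"

text \<open>tau1 G: the tour T(G); tau2 G G' = (A, T(G,G')).\<close>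
definition iter_ok :: "('a \<Rightarrow> 'a \<Rightarrow> real) \<Rightarrow> 'a set \<Rightarrow> nat \<Rightarrow> ('a \<Rightarrow> 'a) \<Rightarrow> 'a
     \<Rightarrow> 'a set \<Rightarrow> 'a set \<Rightarrow> 'a \<Rightarrow> 'a set set \<Rightarrow> ('a set \<Rightarrow> 'a list)
     \<Rightarrow> ('a set \<Rightarrow> 'a set \<Rightarrow> 'a set \<times> 'a list) \<Rightarrow> bool" where
  "iter_ok c R k par rt V U u P tau1 tau2 \<longleftrightarrow>
     valid_u par rt k V U u \<and> valid_grouping par rt k V U u P
     \<and> (\<forall>G\<in>P. gU par V U G \<noteq> {} \<longrightarrow> is_tour c R par (gverts par V G) (gU par V U G) (tau1 G))
     \<and> (\<forall>G\<in>P. \<forall>G'\<in>P. G \<noteq> G' \<longrightarrow>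
          pair_set_ok c R k par V U G G' (fst (tau2 G G'))
          \<and> is_tour c R par (gverts par V G \<union> gverts par V G')
               (gU par V U G \<union> fst (tau2 G G')) (snd (tau2 G G')))"

definition cond1 :: "('a \<Rightarrow> 'a \<Rightarrow> real) \<Rightarrow> 'a set \<Rightarrow> nat \<Rightarrow> ('a \<Rightarrow> 'a) \<Rightarrow> 'a set \<Rightarrow> 'a set
     \<Rightarrow> 'a set set \<Rightarrow> ('a set \<Rightarrow> 'a list) \<Rightarrow> 'a set \<Rightarrow> bool" where
  "cond1 c R k par V U P tau1 G \<longleftrightarrow> G \<in> P \<and> gU par V U G \<noteq> {}
     \<and> tour_cost c (tau1 G) \<le> 2.5 * gcost c par V G + ellS c R k (gU par V U G) / beta"

definition cond2 :: "('a \<Rightarrow> 'a \<Rightarrow> real) \<Rightarrow> 'a set \<Rightarrow> nat \<Rightarrow> ('a \<Rightarrow> 'a) \<Rightarrow> 'a set \<Rightarrow> 'a set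
     \<Rightarrow> 'a set set \<Rightarrow> ('a set \<Rightarrow> 'a set \<Rightarrow> 'a set \<times> 'a list) \<Rightarrow> 'a set \<Rightarrow> 'a set \<Rightarrow> bool" where
  "cond2 c R k par V U P tau2 G G' \<longleftrightarrow> G \<in> P \<and> G' \<in> P \<and> G \<noteq> G'
     \<and> tour_cost c (snd (tau2 G G'))
        \<le> 2.5 * gcost c par V G + ellS c R k (gU par V U G \<union> fst (tau2 G G')) / beta"

definition prune_step :: "('a \<Rightarrow> 'a \<Rightarrow> real) \<Rightarrow> 'a set \<Rightarrow> nat \<Rightarrow> ('a \<Rightarrow> 'a) \<Rightarrow> 'a
     \<Rightarrow> 'a set \<times> 'a set \<Rightarrow> 'a list \<Rightarrow> 'a set \<times> 'a set \<Rightarrow> bool" where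
  "prune_step c R k par rt s t s' \<longleftrightarrow> (case s of (V, U) \<Rightarrow>
     (\<exists>u P tau1 tau2. iter_ok c R k par rt V U u P tau1 tau2 \<and>
       ((\<exists>G. cond1 c R k par V U P tau1 G \<and> t = tau1 G
            \<and> s' = (V - gverts par V G, U - gU par V U G))
        \<or> ((\<nexists>G. cond1 c R k par V U P tau1 G) \<and>
           (\<exists>G G'. cond2 c R k par V U P tau2 G G' \<and> t = snd (tau2 G G')
            \<and> s' = (V - gverts par V G, U - (gU par V U G \<union> fst (tau2 G G'))))))))"

definition prune_stop :: "('a \<Rightarrow> 'a \<Rightarrow> real) \<Rightarrow> 'a set \<Rightarrow> nat \<Rightarrow> ('a \<Rightarrow> 'a) \<Rightarrow> 'a
     \<Rightarrow> 'a set \<times> 'a set \<Rightarrow> bool" where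
  "prune_stop c R k par rt s \<longleftrightarrow> (case s of (V, U) \<Rightarrow>
     (\<exists>u P tau1 tau2. iter_ok c R k par rt V U u P tau1 tau2
       \<and> (\<nexists>G. cond1 c R k par V U P tau1 G)
       \<and> (\<nexists>G G'. cond2 c R k par V U P tau2 G G')))"

inductive prune_run :: "('a \<Rightarrow> 'a \<Rightarrow> real) \<Rightarrow> 'a set \<Rightarrow> nat \<Rightarrow> ('a \<Rightarrow> 'a) \<Rightarrow> 'a
     \<Rightarrow> 'a set \<times> 'a set \<Rightarrow> 'a list list \<Rightarrow> 'a set \<times> 'a set \<Rightarrow> bool"
  for c R k par rt where
  finish: "prune_stop c R k par rt s \<Longrightarrow> prune_run c R k par rt s [] s"
| iterate: "prune_step c R k par rt s t s' \<Longrightarrow> prune_run c R k par rt s' ts s''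
         \<Longrightarrow> prune_run c R k par rt s (t # ts) s''"

end

theory Submission
  imports Defs
begin

text \<open>Every iteration of Tree Pruning removes a set X of tree vertices and covers a set Y of
  clients, and by its acceptance test its tour costs at most 2.5 times the parent edges of X
  plus 1/beta times ell(Y). Along a run these charges telescope, so the tours of one tree cost at
  most 2.5 times the parent edges deleted plus 1/beta times the ell-value of the clients covered.
  The trees of the forest are the disjoint subtrees of its roots, and every forest edge is the
  parent edge of exactly one non-root vertex, so summing over the trees gives the bound.\<close>

definition parent_cost :: "('a \<Rightarrow> 'a \<Rightarrow> real) \<Rightarrow> ('a \<Rightarrow> 'a) \<Rightarrow> 'a set \<Rightarrow> real" where
  "parent_cost c par X = (\<Sum>x\<in>X. c x (par x))"

lemma prune_step_cost_bound:
  assumes "prune_step c R k par rt (V, U) t (V', U')"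
  obtains X Y where "X \<subseteq> V" "Y \<subseteq> U" "V' = V - X" "U' = U - Y"
    "tour_cost c t \<le> 2.5 * parent_cost c par X + ellS c R k Y / beta"
proof -
  have gverts_sub: "gverts par V G \<subseteq> V" for G unfolding gverts_def subtree_def by auto
  have gU_sub: "gU par V U G \<subseteq> U" for G unfolding gU_def by auto
  from assms obtain u P tau1 tau2 where it: "iter_ok c R k par rt V U u P tau1 tau2"
    and "(\<exists>G. cond1 c R k par V U P tau1 G \<and> t = tau1 G
            \<and> (V', U') = (V - gverts par V G, U - gU par V U G))
        \<or> (\<exists>G G'. cond2 c R k par V U P tau2 G G' \<and> t = snd (tau2 G G')
            \<and> (V', U') = (V - gverts par V G, U - (gU par V U G \<union> fst (tau2 G G'))))"
    unfolding prune_step_def prod.case by blast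
  then consider (single) G where "cond1 c R k par V U P tau1 G" "t = tau1 G"
      "V' = V - gverts par V G" "U' = U - gU par V U G"
    | (pair) G G' where "cond2 c R k par V U P tau2 G G'" "t = snd (tau2 G G')"
      "V' = V - gverts par V G" "U' = U - (gU par V U G \<union> fst (tau2 G G'))"
    by auto
  then show thesis
  proof cases
    case single
    then show thesis
      using that[of "gverts par V G" "gU par V U G"] gverts_sub gU_sub
      unfolding cond1_def gcost_def parent_cost_def by auto
  next
    case pair
    then have "fst (tau2 G G') \<subseteq> gU par V U G'"
      using it unfolding cond2_def iter_ok_def pair_set_ok_def by auto
    then have "gU par V U G \<union> fst (tau2 G G') \<subseteq> U"
      using gU_sub by blast
    then show thesis
      using pair that[of "gverts par V G" "gU par V U G \<union> fst (tau2 G G')"] gverts_sub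
      unfolding cond2_def gcost_def parent_cost_def by auto
  qed
qed

lemma prune_run_cost_bound:
  assumes "prune_run c R k par rt s ts s'" "finite (fst s)" "finite (snd s)"
  shows "fst s' \<subseteq> fst s \<and> snd s' \<subseteq> snd s \<and>
    (\<Sum>t\<leftarrow>ts. tour_cost c t) \<le> 2.5 * (parent_cost c par (fst s) - parent_cost c par (fst s'))
      + (ellS c R k (snd s) - ellS c R k (snd s')) / beta"
  using assms
proof (induction rule: prune_run.induct)
  case (finish s)
  then show ?case by simp
next
  case (iterate s t s' ts s'')
  obtain V U V' U' where s: "s = (V, U)" and s': "s' = (V', U')" by fastforce
  obtain X Y where XY: "X \<subseteq> V" "Y \<subseteq> U" "V' = V - X" "U' = U - Y"
    and tour: "tour_cost c t \<le> 2.5 * parent_cost c par X + ellS c R k Y / beta"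
    using prune_step_cost_bound iterate.hyps(1) unfolding s s' by metis
  have "finite V" "finite U" using iterate.prems s by auto
  then have "parent_cost c par V = parent_cost c par X + parent_cost c par V'"
    and "ellS c R k U = ellS c R k Y + ellS c R k U'"
    using XY by (simp_all add: parent_cost_def ellS_def sum.subset_diff finite_subset)
  moreover have "fst s'' \<subseteq> V' \<and> snd s'' \<subseteq> U' \<and>
    (\<Sum>t\<leftarrow>ts. tour_cost c t) \<le> 2.5 * (parent_cost c par V' - parent_cost c par (fst s''))
      + (ellS c R k U' - ellS c R k (snd s'')) / beta"
    using iterate.IH \<open>finite V\<close> \<open>finite U\<close> XY unfolding s' by simp
  ultimately show ?case
    using tour XY unfolding s by (auto simp: diff_divide_distrib add_divide_distrib)
qed

lemma funpow_fixed_point: "par s = s \<Longrightarrow> (par ^^ n) s = s"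
  by (induction n) auto

lemma reached_fixed_points_eq:
  assumes "(par ^^ n) x = s" "(par ^^ m) x = s'" "par s = s" "par s' = s'"
  shows "s = s'"
proof -
  have "(par ^^ (m + n)) x = s"
    using assms(1,3) by (simp add: funpow_add funpow_fixed_point)
  moreover have "(par ^^ (n + m)) x = s'"
    using assms(2,4) by (simp add: funpow_add funpow_fixed_point)
  ultimately show ?thesis
    by (simp add: add.commute)
qed

lemma fixed_point_in_subtree:
  assumes "par r = r" "r \<in> subtree par V s"
  shows "r = s"
proof -
  obtain n where "(par ^^ n) r = s"
    using assms(2) unfolding subtree_def by blast
  then show ?thesis
    using funpow_fixed_point[where par = par and s = r] assms(1) by simp
qed

lemma subtrees_disjoint:
  assumes "par s = s" "par s' = s'" "s \<noteq> s'"
  shows "subtree par V s \<inter> subtree par V s' = {}"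
proof -
  have False if x: "x \<in> subtree par V s" "x \<in> subtree par V s'" for x
  proof -
    obtain n m where "(par ^^ n) x = s" "(par ^^ m) x = s'"
      using x unfolding subtree_def by blast
    then show False
      using reached_fixed_points_eq[where par = par and s = s and s' = s'] assms by blast
  qed
  then show ?thesis
    by blast
qed

lemma subtree_subset: "subtree par V s \<subseteq> V"
  unfolding subtree_def by blast

lemma UN_subtrees:
  assumes "\<forall>v\<in>V. \<exists>n. (par ^^ n) v \<in> Rt"
  shows "(\<Union>s\<in>Rt. subtree par V s) = V"
  using assms unfolding subtree_def by blast

lemma sum_UN_subtree_subsets:
  assumes "finite V" "finite Rt" "\<forall>s\<in>Rt. par s = s" "\<forall>s\<in>Rt. W s \<subseteq> subtree par V s"
  shows "(\<Sum>s\<in>Rt. sum f (W s)) = sum f (\<Union>s\<in>Rt. W s)"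
proof (rule sum.UNION_disjoint[symmetric])
  show "\<forall>s\<in>Rt. finite (W s)"
    using assms(1,4) subtree_subset by (meson finite_subset subset_trans)
  show "\<forall>s\<in>Rt. \<forall>s'\<in>Rt. s \<noteq> s' \<longrightarrow> W s \<inter> W s' = {}"
  proof (intro ballI impI)
    fix s s'
    assume "s \<in> Rt" "s' \<in> Rt" "s \<noteq> s'"
    then have "subtree par V s \<inter> subtree par V s' = {}"
      using assms(3) by (simp add: subtrees_disjoint)
    then show "W s \<inter> W s' = {}"
      using assms(4) \<open>s \<in> Rt\<close> \<open>s' \<in> Rt\<close> by blast
  qed
qed (fact assms(2))

lemma UN_Diff_fixed_points:
  assumes "\<forall>s\<in>Rt. par s = s" "\<forall>s\<in>Rt. W s \<subseteq> subtree par V s"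
  shows "(\<Union>s\<in>Rt. W s - {s}) = (\<Union>s\<in>Rt. W s) - Rt"
proof -
  have "r = s" if "s \<in> Rt" "r \<in> W s" "r \<in> Rt" for r s
    using fixed_point_in_subtree[where par = par and r = r and s = s] assms that by blast
  then show ?thesis
    by blast
qed

lemma edge_cost_doubleton:
  assumes "metric c"
  shows "edge_cost c {x, y} = c x y"
  unfolding edge_cost_def
proof (rule the_equality)
  fix w
  assume "\<exists>a b. {x, y} = {a, b} \<and> w = c a b"
  then show "w = c x y"
    using assms unfolding metric_def by (auto simp: doubleton_eq_iff)
qed blast

lemma inj_on_parent_edges:
  assumes "\<forall>x\<in>X. \<exists>n. (par ^^ n) x \<in> Rt" "X \<inter> Rt = {}"
  shows "inj_on (\<lambda>x. {x, par x}) X"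
proof (rule inj_onI)
  fix x y
  assume x: "x \<in> X" and y: "y \<in> X" and edge: "{x, par x} = {y, par y}"
  show "x = y"
  proof (rule ccontr)
    assume "x \<noteq> y"
    with edge have swap: "par x = y" "par y = x"
      by (auto simp: doubleton_eq_iff)
    have orbit: "(par ^^ n) x \<in> {x, y}" for n
    proof (induction n)
      case (Suc n)
      then have "par ((par ^^ n) x) \<in> {x, y}"
        using swap by (elim insertE) simp_all
      then show ?case
        by simp
    qed simp
    obtain n where "(par ^^ n) x \<in> Rt"
      using assms(1) x by blast
    with orbit[of n] have "x \<in> Rt \<or> y \<in> Rt"
      by auto
    then show False
      using assms(2) x y by blast
  qed
qed

lemma forest_cost_parent_edges:
  assumes "metric c" "finite X" "\<forall>r\<in>Rt. par r = r" "\<forall>x\<in>X. \<exists>n. (par ^^ n) x \<in> Rt"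
  shows "forest_cost c ((\<lambda>x. {x, par x}) ` (X - Rt)) = parent_cost c par X"
proof -
  have "inj_on (\<lambda>x. {x, par x}) (X - Rt)"
    by (rule inj_on_parent_edges[where Rt = Rt]) (use assms(4) in auto)
  then have "forest_cost c ((\<lambda>x. {x, par x}) ` (X - Rt)) = parent_cost c par (X - Rt)"
    unfolding forest_cost_def parent_cost_def
    by (simp add: sum.reindex edge_cost_doubleton[OF assms(1)])
  also have "\<dots> = parent_cost c par X"
    unfolding parent_cost_def
    using assms(1-3) by (intro sum.mono_neutral_left) (auto simp: metric_def)
  finally show ?thesis .
qed

lemma tree_edges_UN:
  "(\<Union>s\<in>Rt. tree_edges par s (W s)) = (\<lambda>x. {x, par x}) ` (\<Union>s\<in>Rt. W s - {s})"
  unfolding tree_edges_def by blast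

lemma forest_cost_UN_tree_edges:
  assumes "metric c" "finite V" "finite Rt" "\<forall>r\<in>Rt. par r = r"
    and "\<forall>v\<in>V. \<exists>n. (par ^^ n) v \<in> Rt" "\<forall>s\<in>Rt. W s \<subseteq> subtree par V s"
  shows "forest_cost c (\<Union>s\<in>Rt. tree_edges par s (W s)) = (\<Sum>s\<in>Rt. parent_cost c par (W s))"
proof -
  have "(\<Union>s\<in>Rt. W s) \<subseteq> V"
    using assms(6) subtree_subset[of par V] by blast
  then have "finite (\<Union>s\<in>Rt. W s)" "\<forall>x\<in>\<Union>s\<in>Rt. W s. \<exists>n. (par ^^ n) x \<in> Rt"
    using assms(2,5) by (auto intro: finite_subset)
  then have "forest_cost c ((\<lambda>x. {x, par x}) ` ((\<Union>s\<in>Rt. W s) - Rt))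
      = parent_cost c par (\<Union>s\<in>Rt. W s)"
    using assms(1,4) by (intro forest_cost_parent_edges)
  then show ?thesis
    unfolding tree_edges_UN UN_Diff_fixed_points[OF assms(4,6)] parent_cost_def
    using sum_UN_subtree_subsets[OF assms(2,3,4,6), of "\<lambda>x. c x (par x)"] by simp
qed

lemma pruning_forest_cost_bound:
  assumes "metric c" "finite V" "Rt \<subseteq> V" "\<forall>r\<in>Rt. par r = r"
    and "\<forall>v\<in>V. \<exists>n. (par ^^ n) v \<in> Rt"
    and "\<forall>s\<in>Rt. prune_run c R k par s
           (subtree par V s, subtree par V s - {s}) (tours s) (fin s)"
  shows "(\<Sum>s\<in>Rt. \<Sum>t\<leftarrow>tours s. tour_cost c t)
    \<le> 2.5 * (forest_cost c ((\<lambda>v. {v, par v}) ` (V - Rt))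
               - forest_cost c (\<Union>s\<in>Rt. tree_edges par s (fst (fin s))))
      + (ellS c R k (V - Rt) - ellS c R k (\<Union>s\<in>Rt. snd (fin s))) / beta"
proof -
  define T where "T s = subtree par V s" for s
  define Vf where "Vf s = fst (fin s)" for s
  define Uf where "Uf s = snd (fin s)" for s
  have "finite Rt"
    using assms(2,3) by (rule finite_subset[rotated])
  have run: "Vf s \<subseteq> T s \<and> Uf s \<subseteq> T s - {s} \<and>
      (\<Sum>t\<leftarrow>tours s. tour_cost c t) \<le> 2.5 * (parent_cost c par (T s) - parent_cost c par (Vf s))
        + (ellS c R k (T s - {s}) - ellS c R k (Uf s)) / beta" if "s \<in> Rt" for s
  proof -
    have "prune_run c R k par s (T s, T s - {s}) (tours s) (fin s)"
      using assms(6) that unfolding T_def by blast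
    moreover have "finite (T s)"
      unfolding T_def using assms(2) subtree_subset by (rule finite_subset[rotated])
    ultimately show ?thesis
      using prune_run_cost_bound[of c R k par s "(T s, T s - {s})"] unfolding Vf_def Uf_def by simp
  qed
  have Vf_sub: "\<forall>s\<in>Rt. Vf s \<subseteq> subtree par V s" and Uf_sub: "\<forall>s\<in>Rt. Uf s \<subseteq> subtree par V s"
    using run unfolding T_def by blast+
  have T_sub: "\<forall>s\<in>Rt. T s - {s} \<subseteq> subtree par V s"
    unfolding T_def by blast
  have UN_T_Diff: "(\<Union>s\<in>Rt. T s - {s}) = V - Rt"
    using UN_Diff_fixed_points[OF assms(4), where W = T and V = V] UN_subtrees[OF assms(5)]
    unfolding T_def by simp
  then have "(\<lambda>v. {v, par v}) ` (V - Rt) = (\<Union>s\<in>Rt. tree_edges par s (T s))"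
    unfolding tree_edges_UN by simp
  then have forest_init: "forest_cost c ((\<lambda>v. {v, par v}) ` (V - Rt))
      = (\<Sum>s\<in>Rt. parent_cost c par (T s))"
    using forest_cost_UN_tree_edges[OF assms(1,2) \<open>finite Rt\<close> assms(4,5)] unfolding T_def by simp
  have forest_final: "forest_cost c (\<Union>s\<in>Rt. tree_edges par s (Vf s))
      = (\<Sum>s\<in>Rt. parent_cost c par (Vf s))"
    using assms(1,2) \<open>finite Rt\<close> assms(4,5) Vf_sub by (rule forest_cost_UN_tree_edges)
  have ell_init: "ellS c R k (V - Rt) = (\<Sum>s\<in>Rt. ellS c R k (T s - {s}))"
    unfolding ellS_def UN_T_Diff[symmetric]
    using sum_UN_subtree_subsets[OF assms(2) \<open>finite Rt\<close> assms(4) T_sub, where f = "ell c R k"] by simp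
  have ell_final: "ellS c R k (\<Union>s\<in>Rt. Uf s) = (\<Sum>s\<in>Rt. ellS c R k (Uf s))"
    unfolding ellS_def using sum_UN_subtree_subsets[OF assms(2) \<open>finite Rt\<close> assms(4) Uf_sub, where f = "ell c R k"] by simp
  have "(\<Sum>s\<in>Rt. \<Sum>t\<leftarrow>tours s. tour_cost c t)
      \<le> (\<Sum>s\<in>Rt. 2.5 * (parent_cost c par (T s) - parent_cost c par (Vf s))
        + (ellS c R k (T s - {s}) - ellS c R k (Uf s)) / beta)"
    using run by (intro sum_mono) blast
  also have "\<dots> = 2.5 * ((\<Sum>s\<in>Rt. parent_cost c par (T s)) - (\<Sum>s\<in>Rt. parent_cost c par (Vf s)))
      + ((\<Sum>s\<in>Rt. ellS c R k (T s - {s})) - (\<Sum>s\<in>Rt. ellS c R k (Uf s))) / beta"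
    by (simp add: sum.distrib sum_subtractf sum_distrib_left sum_divide_distrib
        right_diff_distrib diff_divide_distrib)
  finally show ?thesis
    unfolding Vf_def[symmetric] Uf_def[symmetric] forest_init forest_final ell_init ell_final .
qed

theorem corollary1:
  fixes c :: "'a \<Rightarrow> 'a \<Rightarrow> real" and C R Uinit :: "'a set" and k :: nat
    and F :: "'a set set" and par :: "'a \<Rightarrow> 'a"
    and tours :: "'a \<Rightarrow> 'a list list" and fin :: "'a \<Rightarrow> 'a set \<times> 'a set"
  assumes "metric c"
    and "finite C" and "finite R" and "C \<inter> R = {}" and "R \<noteq> {}" and "k \<ge> 3"
    and "\<forall>v\<in>C. cdist c v R > 0"
    and "Uinit \<subseteq> C"
    and "rooted_forest (C \<union> R) (R \<union> (C - Uinit)) F"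
    and "\<forall>F'. rooted_forest (C \<union> R) (R \<union> (C - Uinit)) F' \<longrightarrow> forest_cost c F \<le> forest_cost c F'"
    and "\<forall>v\<in>R \<union> (C - Uinit). par v = v"
    and "\<forall>v\<in>(C \<union> R) - (R \<union> (C - Uinit)). par v \<in> C \<union> R"
    and "\<forall>v\<in>C \<union> R. \<exists>n. (par ^^ n) v \<in> R \<union> (C - Uinit)"
    and "F = {{v, par v} | v. v \<in> (C \<union> R) - (R \<union> (C - Uinit))}"
    and "\<forall>s\<in>R \<union> (C - Uinit). prune_run c R k par s
           (subtree par (C \<union> R) s, subtree par (C \<union> R) s - {s}) (tours s) (fin s)"
  shows "(\<Sum>s\<in>R \<union> (C - Uinit). \<Sum>t\<leftarrow>tours s. tour_cost c t)
    \<le> 2.5 * (forest_cost c F - forest_cost c (\<Union>s\<in>R \<union> (C - Uinit). tree_edges par s (fst (fin s))))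
      + (ellS c R k Uinit - ellS c R k (\<Union>s\<in>R \<union> (C - Uinit). snd (fin s))) / beta"
proof -
  let ?V = "C \<union> R" and ?Rt = "R \<union> (C - Uinit)"
  have "?V - ?Rt = Uinit"
    using assms(4,8) by blast
  moreover have "F = (\<lambda>v. {v, par v}) ` (?V - ?Rt)"
    using assms(14) by blast
  moreover have "?Rt \<subseteq> ?V" and "finite ?V"
    using assms(2,3) by auto
  ultimately show ?thesis
    using pruning_forest_cost_bound[of c ?V ?Rt par R k tours fin] assms(1,11,13,15) by simp
qed

end
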